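(* Let $R$ be an NJ-symmetric ring. Then $R/J(R)$ is reduced (has no nonzero nilpotent elements) if either (1) $R$ is semiperiodic, or (2) $R$ is left SF.
   Context: Rings are associative with identity. $N(R)$ is the set of nilpotent elements, $J(R)$ the Jacobson radical, $Z(R)$ the center. $R$ is NJ-symmetric if for all $a,b,c\in R$, $abc\in N(R)$ implies $bac\in J(R)$. $R$ is semiperiodic if for each $a\in R\setminus (J(R)\cup Z(R))$ there exist positive integers $p,q$ of opposite parity with $a^q-a^p\in N(R)$. $R$ is left SF if every simple left $R$-module is flat. *)

theory Defs
  imports Main
begin

definition nilpotents :: "'a::ring_1 set" where
  "nilpotents = {x. \<exists>n::nat. x ^ n = 0}"

definition ring_center :: "'a::ring_1 set" where
  "ring_center = {x. \<forall>y. x * y = y * x}"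

definition left_ideal :: "'a::ring_1 set \<Rightarrow> bool" where
  "left_ideal I \<longleftrightarrow> 0 \<in> I \<and> (\<forall>x\<in>I. \<forall>y\<in>I. x + y \<in> I) \<and> (\<forall>x\<in>I. - x \<in> I)
     \<and> (\<forall>r. \<forall>x\<in>I. r * x \<in> I)"

definition right_ideal :: "'a::ring_1 set \<Rightarrow> bool" where
  "right_ideal I \<longleftrightarrow> 0 \<in> I \<and> (\<forall>x\<in>I. \<forall>y\<in>I. x + y \<in> I) \<and> (\<forall>x\<in>I. - x \<in> I)
     \<and> (\<forall>r. \<forall>x\<in>I. x * r \<in> I)"

definition maximal_left_ideal :: "'a::ring_1 set \<Rightarrow> bool" where
  "maximal_left_ideal I \<longleftrightarrow> left_ideal I \<and> I \<noteq> UNIV \<and>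
     (\<forall>K. left_ideal K \<and> I \<subseteq> K \<and> K \<noteq> UNIV \<longrightarrow> K = I)"

definition jacobson :: "'a::ring_1 set" where
  "jacobson = \<Inter> {I. maximal_left_ideal I}"

definition NJ_symmetric :: "'a::ring_1 itself \<Rightarrow> bool" where
  "NJ_symmetric _ \<longleftrightarrow> (\<forall>a b c::'a. a * b * c \<in> nilpotents \<longrightarrow> b * a * c \<in> jacobson)"

definition semiperiodic :: "'a::ring_1 itself \<Rightarrow> bool" where
  "semiperiodic _ \<longleftrightarrow> (\<forall>a::'a. a \<notin> jacobson \<union> ring_center \<longrightarrow>
     (\<exists>p q::nat. p > 0 \<and> q > 0 \<and> odd (p + q) \<and> a ^ q - a ^ p \<in> nilpotents))"

text \<open>R/J(R) is reduced: every element whose image in R/J(R) is nilpotent lies in J(R).\<close>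
definition quotient_jacobson_reduced :: "'a::ring_1 itself \<Rightarrow> bool" where
  "quotient_jacobson_reduced _ \<longleftrightarrow> (\<forall>a::'a. (\<exists>n::nat. a ^ n \<in> jacobson) \<longrightarrow> a \<in> jacobson)"

definition left_module ::
  "'b set \<Rightarrow> ('b \<Rightarrow> 'b \<Rightarrow> 'b) \<Rightarrow> 'b \<Rightarrow> ('a::ring_1 \<Rightarrow> 'b \<Rightarrow> 'b) \<Rightarrow> bool" where
  "left_module M add z sm \<longleftrightarrow>
     z \<in> M \<and> (\<forall>x\<in>M. \<forall>y\<in>M. add x y \<in> M) \<and> (\<forall>r. \<forall>x\<in>M. sm r x \<in> M)
     \<and> (\<forall>x\<in>M. \<forall>y\<in>M. \<forall>w\<in>M. add (add x y) w = add x (add y w))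
     \<and> (\<forall>x\<in>M. \<forall>y\<in>M. add x y = add y x)
     \<and> (\<forall>x\<in>M. add z x = x)
     \<and> (\<forall>x\<in>M. \<exists>y\<in>M. add x y = z)
     \<and> (\<forall>r. \<forall>x\<in>M. \<forall>y\<in>M. sm r (add x y) = add (sm r x) (sm r y))
     \<and> (\<forall>r s. \<forall>x\<in>M. sm (r + s) x = add (sm r x) (sm s x))
     \<and> (\<forall>r s. \<forall>x\<in>M. sm (r * s) x = sm r (sm s x))
     \<and> (\<forall>x\<in>M. sm 1 x = x)"

definition submodule ::
  "'b set \<Rightarrow> 'b set \<Rightarrow> ('b \<Rightarrow> 'b \<Rightarrow> 'b) \<Rightarrow> 'b \<Rightarrow> ('a::ring_1 \<Rightarrow> 'b \<Rightarrow> 'b) \<Rightarrow> bool" where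
  "submodule N M add z sm \<longleftrightarrow> N \<subseteq> M \<and> z \<in> N \<and> (\<forall>x\<in>N. \<forall>y\<in>N. add x y \<in> N)
     \<and> (\<forall>r. \<forall>x\<in>N. sm r x \<in> N)"

definition simple_left_module ::
  "'b set \<Rightarrow> ('b \<Rightarrow> 'b \<Rightarrow> 'b) \<Rightarrow> 'b \<Rightarrow> ('a::ring_1 \<Rightarrow> 'b \<Rightarrow> 'b) \<Rightarrow> bool" where
  "simple_left_module M add z sm \<longleftrightarrow> left_module M add z sm \<and> M \<noteq> {z} \<and>
     (\<forall>N. submodule N M add z sm \<longrightarrow> N = {z} \<or> N = M)"

text \<open>Tensor product I \<otimes>_R M of a right ideal I with a left module M, presented as the free
  abelian group on I \<times> M (finitely supported integer functions) modulo the subgroup generated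
  by the bilinearity and balancing relations.\<close>
definition tgen :: "'a \<times> 'b \<Rightarrow> 'a \<times> 'b \<Rightarrow> int" where
  "tgen x = (\<lambda>p. if p = x then 1 else 0)"

inductive_set tensor_rel ::
  "'a::ring_1 set \<Rightarrow> 'b set \<Rightarrow> ('b \<Rightarrow> 'b \<Rightarrow> 'b) \<Rightarrow> ('a \<Rightarrow> 'b \<Rightarrow> 'b) \<Rightarrow> ('a \<times> 'b \<Rightarrow> int) set"
  for I M add sm where
  zero: "(\<lambda>_. 0) \<in> tensor_rel I M add sm"
| add_left: "\<lbrakk>i \<in> I; i' \<in> I; m \<in> M\<rbrakk> \<Longrightarrow>
     (\<lambda>p. tgen (i + i', m) p - tgen (i, m) p - tgen (i', m) p) \<in> tensor_rel I M add sm"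
| add_right: "\<lbrakk>i \<in> I; m \<in> M; m' \<in> M\<rbrakk> \<Longrightarrow>
     (\<lambda>p. tgen (i, add m m') p - tgen (i, m) p - tgen (i, m') p) \<in> tensor_rel I M add sm"
| balance: "\<lbrakk>i \<in> I; m \<in> M\<rbrakk> \<Longrightarrow>
     (\<lambda>p. tgen (i * r, m) p - tgen (i, sm r m) p) \<in> tensor_rel I M add sm"
| plus: "\<lbrakk>f \<in> tensor_rel I M add sm; g \<in> tensor_rel I M add sm\<rbrakk> \<Longrightarrow>
     (\<lambda>p. f p + g p) \<in> tensor_rel I M add sm"
| neg: "f \<in> tensor_rel I M add sm \<Longrightarrow> (\<lambda>p. - f p) \<in> tensor_rel I M add sm"

text \<open>Flatness of a left module via the standard ideal criterion: for every right ideal I the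
  natural map I \<otimes>_R M \<rightarrow> M, i \<otimes> m \<mapsto> i m, is injective. Every element of
  I \<otimes>_R M is a finite sum of simple tensors (given as a list xs), and it is zero iff its
  formal sum lies in tensor_rel.\<close>
definition flat_left_module ::
  "'b set \<Rightarrow> ('b \<Rightarrow> 'b \<Rightarrow> 'b) \<Rightarrow> 'b \<Rightarrow> ('a::ring_1 \<Rightarrow> 'b \<Rightarrow> 'b) \<Rightarrow> bool" where
  "flat_left_module M add z sm \<longleftrightarrow>
     (\<forall>I xs. right_ideal I \<and> set xs \<subseteq> I \<times> M \<and>
        foldr (\<lambda>(i, m) acc. add (sm i m) acc) xs z = z
        \<longrightarrow> (\<lambda>p. int (count_list xs p)) \<in> tensor_rel I M add sm)"

text \<open>Every simple left R-module is cyclic,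
  hence of cardinality at most |R|, so it is isomorphic to one whose carrier is a subset
  of the ring's own type; quantifying over such modules loses no generality.\<close>
definition left_SF :: "'a::ring_1 itself \<Rightarrow> bool" where
  "left_SF _ \<longleftrightarrow> (\<forall>(M::'a set) add z (sm::'a \<Rightarrow> 'a \<Rightarrow> 'a).
     simple_left_module M add z sm \<longrightarrow> flat_left_module M add z sm)"

end

theory Submission
  imports Defs
begin

text \<open>It suffices to show that \<open>b * b \<in> J(R)\<close> forces \<open>b \<in> J(R)\<close>.
  In the semiperiodic case a non-central \<open>b\<close> satisfies \<open>b^q - b^p \<in> N(R)\<close> with \<open>p \<noteq> q\<close>;
  as \<open>b^(2(q - p)) \<in> J(R)\<close>, the element \<open>1 - b^(q - p)\<close> is left invertible, so \<open>b\<close> is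
  nilpotent and lies in \<open>J(R)\<close> by NJ-symmetry; a central \<open>b\<close> is handled directly.
  In the SF case let \<open>M\<close> be a maximal left ideal. Flatness of the simple module \<open>R/M\<close> turns
  \<open>b * b \<in> M\<close> into \<open>b * b = b * m\<close> with \<open>m \<in> M\<close>. If \<open>b \<notin> M\<close>, then \<open>1 = m' + s (b - m)\<close> for
  some \<open>m' \<in> M\<close>; now \<open>s b (b - m) = 0\<close>, so NJ-symmetry gives \<open>b s (b - m) \<in> J(R) \<subseteq> M\<close>,
  and \<open>b = b m' + b s (b - m) \<in> M\<close>.\<close>

section \<open>Left ideals and the Jacobson radical\<close>

lemma left_ideal_zero: "left_ideal I \<Longrightarrow> 0 \<in> I"
  unfolding left_ideal_def by blast

lemma left_ideal_add: "left_ideal I \<Longrightarrow> x \<in> I \<Longrightarrow> y \<in> I \<Longrightarrow> x + y \<in> I"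
  unfolding left_ideal_def by blast

lemma left_ideal_uminus: "left_ideal I \<Longrightarrow> x \<in> I \<Longrightarrow> - x \<in> I"
  unfolding left_ideal_def by blast

lemma left_ideal_diff: "left_ideal I \<Longrightarrow> x \<in> I \<Longrightarrow> y \<in> I \<Longrightarrow> x - y \<in> I"
  using left_ideal_add left_ideal_uminus by (metis diff_conv_add_uminus)

lemma left_ideal_mult_left: "left_ideal I \<Longrightarrow> x \<in> I \<Longrightarrow> r * x \<in> I"
  unfolding left_ideal_def by blast

lemma left_ideal_eq_UNIV_iff: "left_ideal I \<Longrightarrow> I = UNIV \<longleftrightarrow> 1 \<in> I"
  using left_ideal_mult_left[of I 1] by auto

lemma left_ideal_range_mult_right: "left_ideal (range (\<lambda>r. r * x))"
proof -
  have "r * x + s * x = (r + s) * x" "t * (r * x) = (t * r) * x" for r s t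
    by (simp_all add: algebra_simps)
  then show ?thesis
    unfolding left_ideal_def by (auto intro: range_eqI[of _ _ 0]) (metis minus_mult_left rangeI)
qed

lemma right_ideal_range_mult_left: "right_ideal (range (\<lambda>r. x * r))"
proof -
  have "x * r + x * s = x * (r + s)" "(x * r) * t = x * (r * t)" for r s t
    by (simp_all add: algebra_simps)
  then show ?thesis
    unfolding right_ideal_def by (auto intro: range_eqI[of _ _ 0]) (metis minus_mult_right rangeI)
qed

lemma left_ideal_add_left_multiples:
  assumes "left_ideal M"
  shows "left_ideal {m + s * y | m s. m \<in> M}"
proof -
  have "(m + s * y) + (m' + s' * y) = (m + m') + (s + s') * y"
    "- (m + s * y) = (- m) + (- s) * y" "r * (m + s * y) = r * m + (r * s) * y" for m m' s s' r
    by (simp_all add: algebra_simps)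
  moreover have "0 = 0 + 0 * y" by simp
  ultimately show ?thesis
    using assms unfolding left_ideal_def by blast
qed

lemma maximal_left_ideal_left_ideal: "maximal_left_ideal M \<Longrightarrow> left_ideal M"
  unfolding maximal_left_ideal_def by blast

lemma maximal_left_ideal_one: "maximal_left_ideal M \<Longrightarrow> 1 \<notin> M"
  unfolding maximal_left_ideal_def using left_ideal_eq_UNIV_iff by blast

lemma maximal_left_ideal_one_decomp:
  assumes M: "maximal_left_ideal M" and "y \<notin> M"
  obtains m s where "m \<in> M" "1 = m + s * y"
proof -
  define K where "K = {m + s * y | m s. m \<in> M}"
  have "left_ideal K"
    unfolding K_def using M by (intro left_ideal_add_left_multiples maximal_left_ideal_left_ideal)
  moreover have "M \<subseteq> K"
    unfolding K_def by (force intro: exI[of _ 0])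
  moreover have "y \<in> K"
    unfolding K_def using left_ideal_zero[OF maximal_left_ideal_left_ideal[OF M]]
    by (force intro: exI[of _ 1])
  ultimately have "K = UNIV"
    using M \<open>y \<notin> M\<close> unfolding maximal_left_ideal_def by blast
  then show ?thesis
    using that unfolding K_def by blast
qed

lemma left_ideal_Union_chain:
  assumes "C \<noteq> {}" "\<And>L. L \<in> C \<Longrightarrow> left_ideal L" "\<And>X Y. X \<in> C \<Longrightarrow> Y \<in> C \<Longrightarrow> X \<subseteq> Y \<or> Y \<subseteq> X"
  shows "left_ideal (\<Union>C)"
  unfolding left_ideal_def
proof (intro conjI ballI allI)
  show "0 \<in> \<Union>C"
    using assms(1,2) left_ideal_zero by blast
  fix x y assume "x \<in> \<Union>C" "y \<in> \<Union>C"
  then obtain X Y where "X \<in> C" "Y \<in> C" "x \<in> X" "y \<in> Y" by blast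
  then show "x + y \<in> \<Union>C"
    using assms(2) assms(3)[of X Y] left_ideal_add by blast
next
  fix x r assume "x \<in> \<Union>C"
  then show "- x \<in> \<Union>C" "r * x \<in> \<Union>C"
    using assms(2) left_ideal_uminus left_ideal_mult_left by blast+
qed

lemma left_ideal_extend_maximal:
  assumes "left_ideal L" "1 \<notin> L"
  obtains M where "maximal_left_ideal M" "L \<subseteq> M"
proof -
  define A where "A = {K. left_ideal K \<and> L \<subseteq> K \<and> 1 \<notin> K}"
  have "\<exists>M\<in>A. \<forall>K\<in>A. M \<subseteq> K \<longrightarrow> K = M"
  proof (rule subset_Zorn_nonempty)
    show "A \<noteq> {}"
      using assms unfolding A_def by blast
  next
    fix C assume "C \<noteq> {}" "subset.chain A C"
    then show "\<Union>C \<in> A"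
      using left_ideal_Union_chain[of C] unfolding A_def subset_chain_def by blast
  qed
  then obtain M where "M \<in> A" "\<forall>K\<in>A. M \<subseteq> K \<longrightarrow> K = M" by blast
  then have "maximal_left_ideal M"
    unfolding maximal_left_ideal_def A_def using left_ideal_eq_UNIV_iff by blast
  with \<open>M \<in> A\<close> that show thesis
    unfolding A_def by blast
qed

lemma jacobson_subset: "maximal_left_ideal M \<Longrightarrow> jacobson \<subseteq> M"
  unfolding jacobson_def by blast

lemma mem_jacobsonI: "(\<And>M. maximal_left_ideal M \<Longrightarrow> x \<in> M) \<Longrightarrow> x \<in> jacobson"
  unfolding jacobson_def by blast

lemma jacobson_mult_left: "x \<in> jacobson \<Longrightarrow> r * x \<in> jacobson"
  by (meson jacobson_subset left_ideal_mult_left maximal_left_ideal_left_ideal mem_jacobsonI subsetD)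

lemma jacobson_one_minus_left_invertible:
  assumes "j \<in> jacobson"
  obtains u where "u * (1 - j) = 1"
proof (rule ccontr)
  assume "\<not> thesis"
  with that have "1 \<notin> range (\<lambda>r. r * (1 - j))" by auto
  then obtain M where M: "maximal_left_ideal M" and "range (\<lambda>r. r * (1 - j)) \<subseteq> M"
    using left_ideal_extend_maximal left_ideal_range_mult_right by blast
  then have "1 - j \<in> M"
    by (metis mult_1 rangeI subsetD)
  moreover have "j \<in> M"
    using assms M jacobson_subset by blast
  ultimately have "(1 - j) + j \<in> M"
    using M left_ideal_add maximal_left_ideal_left_ideal by blast
  with M show False
    using maximal_left_ideal_one by fastforce
qed

lemma quotient_jacobson_reducedI:
  assumes "\<And>b::'a::ring_1. b * b \<in> jacobson \<Longrightarrow> b \<in> jacobson"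
  shows "quotient_jacobson_reduced TYPE('a)"
proof -
  have "a \<in> jacobson" if "a ^ n \<in> jacobson" for n and a :: 'a
    using that
  proof (induction n)
    case 0
    then show ?case
      using jacobson_mult_left[of 1 a] by simp
  next
    case (Suc n)
    show ?case
    proof (cases n)
      case 0
      with Suc.prems show ?thesis by simp
    next
      case (Suc k)
      then have "a ^ n * a ^ n = a ^ k * a ^ Suc n"
        by (metis add_Suc add_Suc_right power_add)
      then have "a ^ n * a ^ n \<in> jacobson"
        using jacobson_mult_left[OF \<open>a ^ Suc n \<in> jacobson\<close>] by simp
      then show ?thesis
        using assms Suc.IH by blast
    qed
  qed
  then show ?thesis
    unfolding quotient_jacobson_reduced_def by blast
qed

section \<open>Semiperiodic rings\<close>

lemma NJ_symmetric_nilpotents_subset_jacobson: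
  assumes "NJ_symmetric TYPE('a::ring_1)"
  shows "(nilpotents :: 'a set) \<subseteq> jacobson"
proof
  fix x :: 'a assume "x \<in> nilpotents"
  moreover have "1 * x * 1 \<in> nilpotents \<longrightarrow> x * 1 * 1 \<in> jacobson"
    using assms unfolding NJ_symmetric_def by blast
  ultimately show "x \<in> jacobson" by simp
qed

lemma nilpotents_uminus:
  assumes "x \<in> nilpotents"
  shows "- x \<in> nilpotents"
proof -
  obtain n where "x ^ n = 0"
    using assms unfolding nilpotents_def by blast
  then have "(- x) ^ n = 0"
    unfolding power_minus[of x n] by simp
  then show ?thesis
    unfolding nilpotents_def by blast
qed

lemma central_square_mem_jacobson:
  assumes "b \<in> ring_center" "b * b \<in> jacobson"
  shows "b \<in> jacobson"
proof (rule mem_jacobsonI, rule ccontr)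
  fix M assume M: "maximal_left_ideal M" and "b \<notin> M"
  then obtain m s where "m \<in> M" and m: "1 = m + s * b"
    by (rule maximal_left_ideal_one_decomp)
  have "b * s = s * b"
    using assms(1) unfolding ring_center_def by blast
  have "m = 1 - s * b"
    using m by (simp add: algebra_simps)
  then have "(1 + s * b) * m = 1 - s * (b * s) * b"
    by (simp only:) (simp add: algebra_simps)
  also have "\<dots> = 1 - (s * s) * (b * b)"
    using \<open>b * s = s * b\<close> by (simp add: mult.assoc)
  finally have "1 = (1 + s * b) * m + (s * s) * (b * b)"
    by (simp add: algebra_simps)
  moreover have "(1 + s * b) * m \<in> M" "(s * s) * (b * b) \<in> M"
    using M \<open>m \<in> M\<close> assms(2) jacobson_subset jacobson_mult_left
      left_ideal_mult_left maximal_left_ideal_left_ideal by blast+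
  ultimately show False
    using M left_ideal_add maximal_left_ideal_left_ideal maximal_left_ideal_one by metis
qed

lemma power_mult_distrib_commuting:
  fixes x y :: "'a::monoid_mult"
  assumes "x * y = y * x"
  shows "(x * y) ^ n = x ^ n * y ^ n"
proof (induction n)
  case (Suc n)
  have "y * x ^ n = x ^ n * y"
    using power_commuting_commutes[OF assms] by simp
  then show ?case
    using Suc by (simp add: mult.assoc flip: mult.assoc[of y])
qed simp

lemma left_invertible_power_cancel:
  fixes v w y :: "'a::ring_1"
  assumes "v * w = 1" "w ^ n * y = 0"
  shows "y = 0"
  using assms(2)
proof (induction n)
  case (Suc n)
  have "w ^ n * y = v * (w * w ^ n * y)"
    using assms(1) by (simp flip: mult.assoc)
  with Suc show ?case by simp
qed simp

text \<open>With \<open>d = q - p\<close> and \<open>w = 1 - b^d\<close>, the element \<open>w b^p = b^p - b^q\<close> is nilpotent and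
  \<open>w\<close> commutes with \<open>b\<close>; \<open>w\<close> is left invertible because \<open>1 - b^(2d) = (1 + b^d) w\<close> is.\<close>
lemma nilpotent_of_power_diff_nilpotent:
  assumes "b * b \<in> jacobson" "0 < p" "p < q" "b ^ q - b ^ p \<in> nilpotents"
  shows "b \<in> nilpotents"
proof -
  define d where "d = q - p"
  define w where "w = 1 - b ^ d"
  have "1 \<le> d" "q = p + d"
    using assms(2,3) unfolding d_def by auto
  have "d + d = (2 * d - 2) + 2"
    using \<open>1 \<le> d\<close> by simp
  then have "b ^ d * b ^ d = b ^ (2 * d - 2) * b ^ 2"
    by (metis power_add)
  then obtain u where "u * (1 - b ^ d * b ^ d) = 1"
    using assms(1) jacobson_mult_left jacobson_one_minus_left_invertible
    by (metis power2_eq_square)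
  then have w_inv: "(u * (1 + b ^ d)) * w = 1"
    unfolding w_def by (simp add: algebra_simps mult.assoc)
  have "b ^ d * b ^ p = b ^ p * b ^ d"
    by (simp add: add.commute flip: power_add)
  then have "w * b ^ p = - (b ^ q - b ^ p)" and w_comm: "w * b ^ p = b ^ p * w"
    unfolding w_def \<open>q = p + d\<close> by (simp_all add: algebra_simps power_add)
  then have "w * b ^ p \<in> nilpotents"
    using nilpotents_uminus[OF assms(4)] by simp
  then obtain k where "(w * b ^ p) ^ k = 0"
    unfolding nilpotents_def by blast
  then have "w ^ k * b ^ (p * k) = 0"
    unfolding power_mult_distrib_commuting[OF w_comm] by (simp add: power_mult)
  then have "b ^ (p * k) = 0"
    using w_inv left_invertible_power_cancel by blast
  then show ?thesis
    unfolding nilpotents_def by blast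
qed

lemma semiperiodic_square_mem_jacobson:
  assumes NJ: "NJ_symmetric TYPE('a::ring_1)" and "semiperiodic TYPE('a)"
    and "(b::'a) * b \<in> jacobson"
  shows "b \<in> jacobson"
proof (cases "b \<in> jacobson \<union> ring_center")
  case True
  then show ?thesis
    using central_square_mem_jacobson assms(3) by blast
next
  case False
  then obtain p q :: nat where "0 < p" "0 < q" "odd (p + q)" and pq: "b ^ q - b ^ p \<in> nilpotents"
    using assms(2) unfolding semiperiodic_def by blast
  then have "p \<noteq> q" by auto
  have "b \<in> nilpotents"
  proof (cases "p < q")
    case True
    with \<open>0 < p\<close> pq show ?thesis
      by (intro nilpotent_of_power_diff_nilpotent[OF assms(3)])
  next
    case False
    have "b ^ p - b ^ q \<in> nilpotents"
      using nilpotents_uminus[OF pq] by simp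
    with \<open>0 < q\<close> \<open>p \<noteq> q\<close> False show ?thesis
      by (intro nilpotent_of_power_diff_nilpotent[OF assms(3)]) simp_all
  qed
  then show ?thesis
    using NJ_symmetric_nilpotents_subset_jacobson[OF NJ] by blast
qed

section \<open>Evaluating relations of the tensor product\<close>

text \<open>Elements of \<^const>\<open>tensor_rel\<close> have finite support; on infinite supports the sum is the
  junk value \<open>0\<close>.\<close>
definition free_eval :: "('p \<Rightarrow> 'c::ring_1) \<Rightarrow> ('p \<Rightarrow> int) \<Rightarrow> 'c" where
  "free_eval g f = (\<Sum>p | f p \<noteq> 0. of_int (f p) * g p)"

lemma free_eval_superset:
  assumes "finite T" "{p. f p \<noteq> 0} \<subseteq> T"
  shows "free_eval g f = (\<Sum>p\<in>T. of_int (f p) * g p)"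
  unfolding free_eval_def using assms by (intro sum.mono_neutral_left) auto

lemma free_eval_tgen: "free_eval g (tgen x) = g x"
  unfolding free_eval_def tgen_def by simp

lemma free_eval_diff:
  assumes "finite {p. f p \<noteq> 0}" "finite {p. h p \<noteq> 0}"
  shows "free_eval g (\<lambda>p. f p - h p) = free_eval g f - free_eval g h"
proof -
  let ?T = "{p. f p \<noteq> 0} \<union> {p. h p \<noteq> 0}"
  have "free_eval g (\<lambda>p. f p - h p) = (\<Sum>p\<in>?T. of_int (f p - h p) * g p)"
    using assms by (intro free_eval_superset) auto
  also have "\<dots> = (\<Sum>p\<in>?T. of_int (f p) * g p) - (\<Sum>p\<in>?T. of_int (h p) * g p)"
    by (simp add: left_diff_distrib sum_subtractf)
  also have "\<dots> = free_eval g f - free_eval g h"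
    using assms by (simp add: free_eval_superset[of ?T f] free_eval_superset[of ?T h])
  finally show ?thesis .
qed

lemma free_eval_add:
  assumes "finite {p. f p \<noteq> 0}" "finite {p. h p \<noteq> 0}"
  shows "free_eval g (\<lambda>p. f p + h p) = free_eval g f + free_eval g h"
proof -
  let ?T = "{p. f p \<noteq> 0} \<union> {p. h p \<noteq> 0}"
  have "free_eval g (\<lambda>p. f p + h p) = (\<Sum>p\<in>?T. of_int (f p + h p) * g p)"
    using assms by (intro free_eval_superset) auto
  also have "\<dots> = (\<Sum>p\<in>?T. of_int (f p) * g p) + (\<Sum>p\<in>?T. of_int (h p) * g p)"
    by (simp add: distrib_right sum.distrib)
  also have "\<dots> = free_eval g f + free_eval g h"
    using assms by (simp add: free_eval_superset[of ?T f] free_eval_superset[of ?T h])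
  finally show ?thesis .
qed

lemma free_eval_uminus: "free_eval g (\<lambda>p. - f p) = - free_eval g f"
  unfolding free_eval_def by (simp add: sum_negf)

lemma finite_support_tgen: "finite {p. tgen x p \<noteq> 0}"
  unfolding tgen_def by simp

lemma finite_support_diff:
  "finite {p. f p \<noteq> 0} \<Longrightarrow> finite {p. h p \<noteq> 0} \<Longrightarrow> finite {p. f p - h p \<noteq> (0::int)}"
  by (rule finite_subset[of _ "{p. f p \<noteq> 0} \<union> {p. h p \<noteq> 0}"]) auto

lemma finite_support_add:
  "finite {p. f p \<noteq> 0} \<Longrightarrow> finite {p. h p \<noteq> 0} \<Longrightarrow> finite {p. f p + h p \<noteq> (0::int)}"
  by (rule finite_subset[of _ "{p. f p \<noteq> 0} \<union> {p. h p \<noteq> 0}"]) auto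

lemma finite_support_tensor_rel: "f \<in> tensor_rel I M add sm \<Longrightarrow> finite {p. f p \<noteq> 0}"
  by (induction rule: tensor_rel.induct)
    (rule finite_support_diff finite_support_add finite_support_tgen | simp)+

lemma free_eval_tgen_diff: "free_eval g (\<lambda>p. tgen x p - tgen y p) = g x - g y"
  by (simp add: free_eval_diff finite_support_tgen free_eval_tgen)

lemma free_eval_tgen_diff3:
  "free_eval g (\<lambda>p. tgen x p - tgen y p - tgen z p) = g x - g y - g z"
proof -
  have "finite {p. tgen x p - tgen y p \<noteq> 0}"
    by (intro finite_support_diff finite_support_tgen)
  then show ?thesis
    by (simp add: free_eval_diff[of "\<lambda>p. tgen x p - tgen y p"] finite_support_tgen
        free_eval_tgen_diff free_eval_tgen)
qed

lemma free_eval_tensor_rel_mem: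
  fixes g :: "'a::ring_1 \<Rightarrow> 'b \<Rightarrow> 'c::ring_1"
  assumes "f \<in> tensor_rel I M add sm"
    and "0 \<in> B" "\<And>x y. x \<in> B \<Longrightarrow> y \<in> B \<Longrightarrow> x + y \<in> B" "\<And>x. x \<in> B \<Longrightarrow> - x \<in> B"
    and "\<And>i i' m. i \<in> I \<Longrightarrow> i' \<in> I \<Longrightarrow> m \<in> M \<Longrightarrow> g (i + i') m - g i m - g i' m \<in> B"
    and "\<And>i m m'. i \<in> I \<Longrightarrow> m \<in> M \<Longrightarrow> m' \<in> M \<Longrightarrow> g i (add m m') - g i m - g i m' \<in> B"
    and "\<And>i m r. i \<in> I \<Longrightarrow> m \<in> M \<Longrightarrow> g (i * r) m - g i (sm r m) \<in> B"
  shows "free_eval (case_prod g) f \<in> B"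
  using assms(1)
proof (induction rule: tensor_rel.induct)
  case zero
  then show ?case
    using assms(2) unfolding free_eval_def by simp
next
  case (plus f h)
  then show ?case
    using assms(3) by (simp add: free_eval_add finite_support_tensor_rel)
next
  case (neg f)
  then show ?case
    using assms(4) by (simp add: free_eval_uminus)
qed (use assms(5-7) in \<open>simp_all add: free_eval_tgen_diff free_eval_tgen_diff3\<close>)

section \<open>The simple module \<open>R/M\<close> and flatness\<close>

text \<open>\<open>R/M\<close> is realised on a set of coset representatives inside \<open>R\<close>, because \<^const>\<open>left_SF\<close>
  only quantifies over modules whose carrier is a subset of the ring.\<close>
definition coset_rep :: "'a::ring_1 set \<Rightarrow> 'a \<Rightarrow> 'a" where
  "coset_rep M x = (SOME y. y - x \<in> M)"

lemma coset_rep_diff_mem: "left_ideal M \<Longrightarrow> coset_rep M x - x \<in> M"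
  unfolding coset_rep_def by (rule someI[of _ x]) (simp add: left_ideal_zero)

lemma coset_rep_eq_iff:
  assumes M: "left_ideal M"
  shows "coset_rep M x = coset_rep M y \<longleftrightarrow> x - y \<in> M"
proof
  assume "coset_rep M x = coset_rep M y"
  then have "x - y = (coset_rep M y - y) - (coset_rep M x - x)"
    by simp
  then show "x - y \<in> M"
    using M coset_rep_diff_mem left_ideal_diff by metis
next
  assume "x - y \<in> M"
  then have "z - x \<in> M \<longleftrightarrow> z - y \<in> M" for z
    using M left_ideal_add left_ideal_diff
    by (metis diff_add_cancel diff_add_eq_diff_diff_swap)
  then show "coset_rep M x = coset_rep M y"
    unfolding coset_rep_def by simp
qed

lemma coset_rep_idem: "left_ideal M \<Longrightarrow> coset_rep M (coset_rep M x) = coset_rep M x"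
  by (simp add: coset_rep_eq_iff coset_rep_diff_mem)

lemma coset_rep_add_left:
  "left_ideal M \<Longrightarrow> coset_rep M (coset_rep M x + y) = coset_rep M (x + y)"
  by (simp add: coset_rep_eq_iff coset_rep_diff_mem)

lemma coset_rep_add_right:
  "left_ideal M \<Longrightarrow> coset_rep M (x + coset_rep M y) = coset_rep M (x + y)"
  by (simp add: coset_rep_eq_iff coset_rep_diff_mem)

lemma coset_rep_mult:
  assumes "left_ideal M"
  shows "coset_rep M (r * coset_rep M x) = coset_rep M (r * x)"
proof -
  have "r * coset_rep M x - r * x = r * (coset_rep M x - x)"
    by (simp add: right_diff_distrib)
  then show ?thesis
    using assms by (simp add: coset_rep_eq_iff coset_rep_diff_mem left_ideal_mult_left)
qed

definition quotient_carrier :: "'a::ring_1 set \<Rightarrow> 'a set" where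
  "quotient_carrier M = range (coset_rep M)"

definition quotient_add :: "'a::ring_1 set \<Rightarrow> 'a \<Rightarrow> 'a \<Rightarrow> 'a" where
  "quotient_add M u v = coset_rep M (u + v)"

definition quotient_zero :: "'a::ring_1 set \<Rightarrow> 'a" where
  "quotient_zero M = coset_rep M 0"

definition quotient_smult :: "'a::ring_1 set \<Rightarrow> 'a \<Rightarrow> 'a \<Rightarrow> 'a" where
  "quotient_smult M r u = coset_rep M (r * u)"

lemma left_module_quotient:
  assumes "left_ideal M"
  shows "left_module (quotient_carrier M) (quotient_add M) (quotient_zero M) (quotient_smult M)"
proof -
  have "\<exists>y. coset_rep M (x + y) = coset_rep M 0" for x
    by (rule exI[of _ "- x"]) simp
  then show ?thesis
    using assms
    unfolding left_module_def quotient_carrier_def quotient_add_def quotient_zero_def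
      quotient_smult_def
    by (auto simp: coset_rep_add_left coset_rep_add_right coset_rep_mult coset_rep_idem
        add_ac distrib_left distrib_right mult.assoc)
qed

lemma simple_left_module_quotient:
  assumes M: "maximal_left_ideal M"
  shows "simple_left_module (quotient_carrier M) (quotient_add M) (quotient_zero M) (quotient_smult M)"
  unfolding simple_left_module_def
proof (intro conjI allI impI)
  have L: "left_ideal M"
    using M by (rule maximal_left_ideal_left_ideal)
  then show "left_module (quotient_carrier M) (quotient_add M) (quotient_zero M) (quotient_smult M)"
    by (rule left_module_quotient)
  have "coset_rep M 1 \<noteq> coset_rep M 0"
    using L M by (simp add: coset_rep_eq_iff maximal_left_ideal_one)
  then show "quotient_carrier M \<noteq> {quotient_zero M}"
    unfolding quotient_carrier_def quotient_zero_def by (metis rangeI singletonD)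
  fix N
  assume N: "submodule N (quotient_carrier M) (quotient_add M) (quotient_zero M) (quotient_smult M)"
  show "N = {quotient_zero M} \<or> N = quotient_carrier M"
  proof (cases "N = {quotient_zero M}")
    case False
    then obtain a where a: "coset_rep M a \<in> N" "coset_rep M a \<noteq> coset_rep M 0"
      using N unfolding submodule_def quotient_carrier_def quotient_zero_def by blast
    then have "a \<notin> M"
      using L by (simp add: coset_rep_eq_iff)
    with M obtain m s where "m \<in> M" "1 = m + s * a"
      by (rule maximal_left_ideal_one_decomp)
    have "coset_rep M c = quotient_smult M (coset_rep M c * s) (coset_rep M a)" for c
    proof -
      have "coset_rep M c - coset_rep M c * s * a = coset_rep M c * m"
        using \<open>1 = m + s * a\<close> by (metis add_diff_cancel_right' distrib_left mult.assoc mult_1_right)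
      then have "coset_rep M (coset_rep M c) = coset_rep M (coset_rep M c * s * a)"
        using L \<open>m \<in> M\<close> by (simp only: coset_rep_eq_iff left_ideal_mult_left)
      then show ?thesis
        unfolding quotient_smult_def using L by (simp add: coset_rep_mult coset_rep_idem)
    qed
    have "quotient_carrier M \<subseteq> N"
    proof
      fix x assume "x \<in> quotient_carrier M"
      then obtain c where "x = coset_rep M c"
        unfolding quotient_carrier_def by blast
      then show "x \<in> N"
        using N a(1) \<open>coset_rep M c = quotient_smult M (coset_rep M c * s) (coset_rep M a)\<close>
        unfolding submodule_def by metis
    qed
    then show ?thesis
      using N unfolding submodule_def by blast
  qed simp
qed

text \<open>In \<open>aR \<otimes> R/M\<close> the tensor \<open>a \<otimes> (x + M)\<close> is mapped to \<open>ax + M = 0\<close>, so by flatness it is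
  a relation; evaluating relations via \<open>i \<otimes> m \<mapsto> i m\<close> is well defined modulo \<open>aM\<close>.\<close>
lemma flat_quotient_mult_mem:
  assumes M: "left_ideal M"
    and flat: "flat_left_module (quotient_carrier M) (quotient_add M) (quotient_zero M) (quotient_smult M)"
    and "a * x \<in> M"
  obtains m where "m \<in> M" "a * x = a * m"
proof -
  let ?I = "range (\<lambda>r. a * r)"
  let ?\<rho> = "coset_rep M"
  define B where "B = (\<lambda>m. a * m) ` M"
  have B_diff: "a * r * (?\<rho> y - y) \<in> B" for r y
    unfolding B_def using M coset_rep_diff_mem left_ideal_mult_left by (metis image_eqI mult.assoc)
  have "foldr (\<lambda>(i, m) acc. quotient_add M (quotient_smult M i m) acc) [(a, ?\<rho> x)] (quotient_zero M)
      = quotient_zero M"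
    using M \<open>a * x \<in> M\<close> unfolding quotient_add_def quotient_smult_def quotient_zero_def
    by (simp add: coset_rep_add_left coset_rep_add_right coset_rep_mult coset_rep_eq_iff)
  moreover have "set [(a, ?\<rho> x)] \<subseteq> ?I \<times> quotient_carrier M"
    unfolding quotient_carrier_def by (auto intro: range_eqI[of _ _ 1])
  ultimately have "(\<lambda>p. int (count_list [(a, ?\<rho> x)] p)) \<in>
      tensor_rel ?I (quotient_carrier M) (quotient_add M) (quotient_smult M)"
    using flat right_ideal_range_mult_left unfolding flat_left_module_def by blast
  then have "free_eval (\<lambda>(i, m). i * m) (\<lambda>p. int (count_list [(a, ?\<rho> x)] p)) \<in> B"
  proof (rule free_eval_tensor_rel_mem)
    show "0 \<in> B" "\<And>u v. u \<in> B \<Longrightarrow> v \<in> B \<Longrightarrow> u + v \<in> B" "\<And>u. u \<in> B \<Longrightarrow> - u \<in> B"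
      unfolding B_def using M left_ideal_zero left_ideal_add left_ideal_uminus
      by (force simp flip: distrib_left minus_mult_right)+
    show "(i + i') * m - i * m - i' * m \<in> B" for i i' m
      using \<open>0 \<in> B\<close> by (simp add: distrib_right)
    show "i * quotient_add M m m' - i * m - i * m' \<in> B" if "i \<in> ?I" for i m m'
    proof -
      obtain r where "i = a * r"
        using \<open>i \<in> ?I\<close> by blast
      then have "i * quotient_add M m m' - i * m - i * m' = a * r * (?\<rho> (m + m') - (m + m'))"
        unfolding quotient_add_def by (simp add: algebra_simps)
      then show ?thesis
        using B_diff by simp
    qed
    show "i * r * m - i * quotient_smult M r m \<in> B" if "i \<in> ?I" for i m r
    proof -
      obtain t where "i = a * t"
        using \<open>i \<in> ?I\<close> by blast
      then have "i * r * m - i * quotient_smult M r m = - (a * t * (?\<rho> (r * m) - r * m))"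
        unfolding quotient_smult_def by (simp add: algebra_simps)
      then show ?thesis
        using B_diff \<open>\<And>u. u \<in> B \<Longrightarrow> - u \<in> B\<close> by simp
    qed
  qed
  moreover have "(\<lambda>p. int (count_list [(a, ?\<rho> x)] p)) = tgen (a, ?\<rho> x)"
    unfolding tgen_def by auto
  ultimately have "a * ?\<rho> x \<in> B"
    by (simp add: free_eval_tgen)
  then obtain m where "m \<in> M" "a * ?\<rho> x = a * m"
    unfolding B_def by blast
  then have "a * x = a * (m - (?\<rho> x - x))"
    by (simp add: algebra_simps)
  moreover have "m - (?\<rho> x - x) \<in> M"
    using M \<open>m \<in> M\<close> coset_rep_diff_mem left_ideal_diff by blast
  ultimately show thesis
    using that by blast
qed

lemma NJ_symmetric_mem_maximal_left_ideal:
  assumes NJ: "NJ_symmetric TYPE('a::ring_1)" and M: "maximal_left_ideal M"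
    and "m \<in> M" "(b::'a) * b = b * m"
  shows "b \<in> M"
proof (rule ccontr)
  assume "b \<notin> M"
  have L: "left_ideal M"
    using M by (rule maximal_left_ideal_left_ideal)
  have "b - m \<notin> M"
  proof
    assume "b - m \<in> M"
    with L \<open>m \<in> M\<close> have "(b - m) + m \<in> M"
      by (intro left_ideal_add)
    with \<open>b \<notin> M\<close> show False by simp
  qed
  with M obtain m' s where "m' \<in> M" and one: "1 = m' + s * (b - m)"
    by (rule maximal_left_ideal_one_decomp)
  have "s * b * (b - m) = s * (b * b - b * m)"
    by (simp add: right_diff_distrib mult.assoc)
  then have "(s * b * (b - m)) ^ 1 = 0"
    using \<open>b * b = b * m\<close> by simp
  then have "s * b * (b - m) \<in> nilpotents"
    unfolding nilpotents_def by blast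
  then have "b * s * (b - m) \<in> jacobson"
    using NJ unfolding NJ_symmetric_def by blast
  then have "b * m' + b * s * (b - m) \<in> M"
    using L M \<open>m' \<in> M\<close> jacobson_subset left_ideal_add left_ideal_mult_left by blast
  moreover have "b * m' + b * s * (b - m) = b"
    using one by (metis distrib_left mult.assoc mult_1_right)
  ultimately show False
    using \<open>b \<notin> M\<close> by simp
qed

lemma left_SF_square_mem_jacobson:
  assumes NJ: "NJ_symmetric TYPE('a::ring_1)" and SF: "left_SF TYPE('a)"
    and "(b::'a) * b \<in> jacobson"
  shows "b \<in> jacobson"
proof (rule mem_jacobsonI)
  fix M :: "'a set" assume M: "maximal_left_ideal M"
  then have "flat_left_module (quotient_carrier M) (quotient_add M) (quotient_zero M) (quotient_smult M)"
    using SF simple_left_module_quotient unfolding left_SF_def by blast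
  moreover have "b * b \<in> M"
    using M \<open>b * b \<in> jacobson\<close> jacobson_subset by blast
  ultimately obtain m where "m \<in> M" "b * b = b * m"
    using flat_quotient_mult_mem[OF maximal_left_ideal_left_ideal[OF M]] by blast
  with NJ M show "b \<in> M"
    by (rule NJ_symmetric_mem_maximal_left_ideal)
qed

theorem theorem2p16:
  assumes "NJ_symmetric TYPE('a::ring_1)"
    and "semiperiodic TYPE('a) \<or> left_SF TYPE('a)"
  shows "quotient_jacobson_reduced TYPE('a)"
proof (rule quotient_jacobson_reducedI)
  fix b :: 'a assume "b * b \<in> jacobson"
  with assms show "b \<in> jacobson"
    using semiperiodic_square_mem_jacobson left_SF_square_mem_jacobson by blast
qed

end
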